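(* Let $G$ be a finite permutation group acting quasi-transitively on a finite set $\Omega$, with constant $t>1$, and suppose $G$ is not transitive on $\Omega$. Let $\Delta_1,\dots,\Delta_r$ ($r>1$) be the $G$-orbits on $\Omega$, fix $\alpha_i\in\Delta_i$ for each $i$, and put $d_i=|G_{\alpha_i}|/t$. Then $d_1\cdot|\Delta_1|=d_i\cdot|\Delta_i|$ for all $i=1,\dots,r$, and the orbit sizes $|\Delta_1|,\dots,|\Delta_r|$ are pairwise distinct.
   Context: A finite permutation group $G$ on a finite set $\Omega$ is called quasi-transitive if there is a natural number $t>1$ such that $|G_{\alpha\beta}|=t$ for all two-element subsets $\{\alpha,\beta\}\subseteq\Omega$, where $G_{\alpha\beta}$ denotes the pointwise stabiliser of $\alpha$ and $\beta$ in $G$, and $G_\alpha$ the stabiliser of $\alpha$. *)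

theory Defs
  imports Complex_Main "HOL-Combinatorics.Permutations"
begin

definition perm_group :: "('a \<Rightarrow> 'a) set \<Rightarrow> 'a set \<Rightarrow> bool" where
  "perm_group G \<Omega> \<longleftrightarrow> finite \<Omega> \<and> id \<in> G \<and> (\<forall>g\<in>G. g permutes \<Omega>)
     \<and> (\<forall>g\<in>G. \<forall>h\<in>G. g \<circ> h \<in> G) \<and> (\<forall>g\<in>G. inv g \<in> G)"

definition stabiliser :: "('a \<Rightarrow> 'a) set \<Rightarrow> 'a \<Rightarrow> ('a \<Rightarrow> 'a) set" where
  "stabiliser G a = {g\<in>G. g a = a}"

definition stabiliser2 :: "('a \<Rightarrow> 'a) set \<Rightarrow> 'a \<Rightarrow> 'a \<Rightarrow> ('a \<Rightarrow> 'a) set" where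
  "stabiliser2 G a b = {g\<in>G. g a = a \<and> g b = b}"

definition orbit_of :: "('a \<Rightarrow> 'a) set \<Rightarrow> 'a \<Rightarrow> 'a set" where
  "orbit_of G a = (\<lambda>g. g a) ` G"

definition quasi_transitive_with :: "('a \<Rightarrow> 'a) set \<Rightarrow> 'a set \<Rightarrow> nat \<Rightarrow> bool" where
  "quasi_transitive_with G \<Omega> t \<longleftrightarrow> t > 1 \<and>
     (\<forall>a\<in>\<Omega>. \<forall>b\<in>\<Omega>. a \<noteq> b \<longrightarrow> card (stabiliser2 G a b) = t)"

definition transitive_on :: "('a \<Rightarrow> 'a) set \<Rightarrow> 'a set \<Rightarrow> bool" where
  "transitive_on G \<Omega> \<longleftrightarrow> (\<forall>a\<in>\<Omega>. \<forall>b\<in>\<Omega>. \<exists>g\<in>G. g a = b)"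

end

theory Submission
  imports Defs
begin

text \<open>Orbit-stabiliser gives the first claim at once, since all the products
  \<open>|G\<^sub>\<alpha>| \<cdot> |\<alpha>\<^sup>G|\<close> equal \<open>|G|\<close>. For the second, quasi-transitivity makes every orbit of
  \<open>H = G\<^sub>\<alpha>\<close> on \<open>\<Omega> - {\<alpha>}\<close> have the same size \<open>d = |H|/t\<close>. If \<open>\<beta>\<close> lies in another
  \<open>G\<close>-orbit of the same size as \<open>\<alpha>\<^sup>G\<close>, then \<open>d\<close> divides both \<open>|\<beta>\<^sup>G|\<close> and
  \<open>|\<alpha>\<^sup>G| - 1\<close>, hence \<open>d = 1\<close>. But then \<open>|H| = t\<close>, so \<open>H = G\<^sub>\<alpha>\<^sub>\<gamma>\<close> for every \<open>\<gamma> \<noteq> \<alpha>\<close>,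
  i.e. \<open>H\<close> is trivial, contradicting \<open>t > 1\<close>.\<close>

lemma perm_group_finite: "perm_group G \<Omega> \<Longrightarrow> finite G"
  unfolding perm_group_def
  by (metis (mono_tags, lifting) finite_permutations mem_Collect_eq rev_finite_subset subsetI)

lemma perm_group_inv_apply: "perm_group G \<Omega> \<Longrightarrow> g \<in> G \<Longrightarrow> inv g (g x) = x"
  unfolding perm_group_def by (meson permutes_inverses(2))

lemma perm_group_apply_inv: "perm_group G \<Omega> \<Longrightarrow> g \<in> G \<Longrightarrow> g (inv g x) = x"
  unfolding perm_group_def by (meson permutes_inverses(1))

lemma perm_group_comp: "perm_group G \<Omega> \<Longrightarrow> g \<in> G \<Longrightarrow> h \<in> G \<Longrightarrow> g \<circ> h \<in> G"
  unfolding perm_group_def by blast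

lemma perm_group_inv: "perm_group G \<Omega> \<Longrightarrow> g \<in> G \<Longrightarrow> inv g \<in> G"
  unfolding perm_group_def by blast

lemma perm_group_fixes_outside: "perm_group G \<Omega> \<Longrightarrow> g \<in> G \<Longrightarrow> x \<notin> \<Omega> \<Longrightarrow> g x = x"
  unfolding perm_group_def by (meson permutes_not_in)

lemma perm_group_stabiliser:
  assumes "perm_group G \<Omega>"
  shows "perm_group (stabiliser G a) \<Omega>"
proof -
  have "inv g \<in> stabiliser G a" if "g \<in> stabiliser G a" for g
    using that perm_group_inv[OF assms] perm_group_inv_apply[OF assms, of g a]
    by (auto simp: stabiliser_def)
  then show ?thesis using assms unfolding perm_group_def stabiliser_def by auto
qed

lemma stabiliser_stabiliser: "stabiliser (stabiliser G a) b = stabiliser2 G a b"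
  unfolding stabiliser_def stabiliser2_def by auto

lemma finite_orbit_of: "perm_group G \<Omega> \<Longrightarrow> finite (orbit_of G x)"
  unfolding orbit_of_def by (simp add: perm_group_finite)

lemma orbit_of_self: "perm_group G \<Omega> \<Longrightarrow> x \<in> orbit_of G x"
  unfolding orbit_of_def perm_group_def by (metis id_apply image_eqI)

lemma orbit_of_closed:
  assumes "perm_group G \<Omega>" "y \<in> orbit_of G x" "h \<in> G"
  shows "h y \<in> orbit_of G x"
proof -
  obtain g where "g \<in> G" "y = g x" using assms(2) unfolding orbit_of_def by blast
  then have "h y = (h \<circ> g) x" "h \<circ> g \<in> G" using perm_group_comp[OF assms(1) assms(3)] by auto
  then show ?thesis unfolding orbit_of_def by (metis image_eqI)
qed

lemma orbit_of_eq_if_mem: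
  assumes "perm_group G \<Omega>" "y \<in> orbit_of G x"
  shows "orbit_of G y = orbit_of G x"
proof
  show "orbit_of G y \<subseteq> orbit_of G x"
    using orbit_of_closed[OF assms(1) assms(2)] by (auto simp: orbit_of_def)
  obtain g where g: "g \<in> G" "y = g x" using assms(2) unfolding orbit_of_def by blast
  then have "x \<in> orbit_of G y"
    using perm_group_inv[OF assms(1)] perm_group_inv_apply[OF assms(1)]
    unfolding orbit_of_def by (metis image_eqI)
  then show "orbit_of G x \<subseteq> orbit_of G y"
    using orbit_of_closed[OF assms(1)] by (auto simp: orbit_of_def)
qed

lemma orbit_of_disjoint:
  assumes "perm_group G \<Omega>" "orbit_of G x \<noteq> orbit_of G y"
  shows "orbit_of G x \<inter> orbit_of G y = {}"
  using orbit_of_eq_if_mem[OF assms(1), of _ x] orbit_of_eq_if_mem[OF assms(1), of _ y] assms(2)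
  by blast

lemma orbit_of_subset: "perm_group G \<Omega> \<Longrightarrow> x \<in> \<Omega> \<Longrightarrow> orbit_of G x \<subseteq> \<Omega>"
  unfolding orbit_of_def perm_group_def by (auto intro: permutes_in_image[THEN iffD2])

lemma card_fibre_eq_card_stabiliser:
  assumes "perm_group G \<Omega>" "g\<^sub>0 \<in> G"
  shows "card {g\<in>G. g x = g\<^sub>0 x} = card (stabiliser G x)"
proof -
  have "{g\<in>G. g x = g\<^sub>0 x} = (\<circ>) g\<^sub>0 ` stabiliser G x"
  proof
    show "(\<circ>) g\<^sub>0 ` stabiliser G x \<subseteq> {g\<in>G. g x = g\<^sub>0 x}"
      using assms perm_group_comp by (auto simp: stabiliser_def)
    show "{g\<in>G. g x = g\<^sub>0 x} \<subseteq> (\<circ>) g\<^sub>0 ` stabiliser G x"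
    proof
      fix g assume g: "g \<in> {g\<in>G. g x = g\<^sub>0 x}"
      have "inv g\<^sub>0 \<circ> g \<in> stabiliser G x"
        using g assms perm_group_comp perm_group_inv perm_group_inv_apply
        by (fastforce simp: stabiliser_def)
      moreover have "g = g\<^sub>0 \<circ> (inv g\<^sub>0 \<circ> g)"
        using perm_group_apply_inv[OF assms] by auto
      ultimately show "g \<in> (\<circ>) g\<^sub>0 ` stabiliser G x" by blast
    qed
  qed
  moreover have "inj ((\<circ>) g\<^sub>0)"
    using assms by (auto intro: fun.inj_map permutes_inj simp: perm_group_def)
  ultimately show ?thesis by (metis card_image inj_on_subset subset_UNIV)
qed

theorem orbit_stabiliser:
  assumes "perm_group G \<Omega>"
  shows "card G = card (stabiliser G x) * card (orbit_of G x)"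
proof -
  have "G = (\<Union>y\<in>orbit_of G x. {g\<in>G. g x = y})" by (auto simp: orbit_of_def)
  also have "card \<dots> = (\<Sum>y\<in>orbit_of G x. card {g\<in>G. g x = y})"
    by (rule card_UN_disjoint) (use finite_orbit_of[OF assms] perm_group_finite[OF assms] in auto)
  also have "\<dots> = (\<Sum>y\<in>orbit_of G x. card (stabiliser G x))"
    by (rule sum.cong) (auto simp: orbit_of_def card_fibre_eq_card_stabiliser[OF assms])
  finally show ?thesis by (simp add: mult.commute)
qed

lemma dvd_card_invariant_set:
  assumes "perm_group H \<Omega>" "finite S" "\<And>y h. y \<in> S \<Longrightarrow> h \<in> H \<Longrightarrow> h y \<in> S"
    and "\<And>y. y \<in> S \<Longrightarrow> card (orbit_of H y) = d"
  shows "d dvd card S"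
proof -
  let ?C = "orbit_of H ` S"
  have U: "\<Union>?C = S"
    using assms(3) orbit_of_self[OF assms(1)] by (auto simp: orbit_of_def)
  have "card (\<Union>?C) = d * card ?C"
  proof (rule card_partition[symmetric])
    show "c\<^sub>1 \<inter> c\<^sub>2 = {}" if "c\<^sub>1 \<in> ?C" "c\<^sub>2 \<in> ?C" "c\<^sub>1 \<noteq> c\<^sub>2" for c\<^sub>1 c\<^sub>2
      using that orbit_of_disjoint[OF assms(1)] by blast
  qed (use assms(2,4) U in auto)
  then show ?thesis using U by simp
qed

lemma quasi_transitive_card_stabiliser2:
  "quasi_transitive_with G \<Omega> t \<Longrightarrow> a \<in> \<Omega> \<Longrightarrow> b \<in> \<Omega> \<Longrightarrow> b \<noteq> a
    \<Longrightarrow> card (stabiliser2 G a b) = t"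
  unfolding quasi_transitive_with_def by (metis)

lemma quasi_transitive_gt_one: "quasi_transitive_with G \<Omega> t \<Longrightarrow> t > 1"
  unfolding quasi_transitive_with_def by simp

lemma card_stabiliser_eq_mult_suborbit:
  assumes "perm_group G \<Omega>" "quasi_transitive_with G \<Omega> t"
    and "a \<in> \<Omega>" "x \<in> \<Omega>" "x \<noteq> a"
  shows "card (stabiliser G a) = t * card (orbit_of (stabiliser G a) x)"
  using orbit_stabiliser[OF perm_group_stabiliser[OF assms(1)], of a x]
    quasi_transitive_card_stabiliser2[OF assms(2-)]
  by (simp add: stabiliser_stabiliser)

text \<open>A point stabiliser of a quasi-transitive group has no fixed point besides
  its own: otherwise it would equal every two-point stabiliser and so be trivial.\<close>

lemma quasi_transitive_suborbit_nontrivial: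
  assumes pg: "perm_group G \<Omega>" and qt: "quasi_transitive_with G \<Omega> t"
    and "a \<in> \<Omega>" "x \<in> \<Omega>" "x \<noteq> a"
  shows "card (orbit_of (stabiliser G a) x) \<noteq> 1"
proof
  let ?H = "stabiliser G a"
  assume "card (orbit_of ?H x) = 1"
  then have card_H: "card ?H = t"
    using card_stabiliser_eq_mult_suborbit[OF assms] by simp
  have "finite ?H" using perm_group_finite[OF perm_group_stabiliser[OF pg]] .
  have "h y = y" if h: "h \<in> ?H" for h y
  proof (cases "y \<in> \<Omega> \<and> y \<noteq> a")
    case True
    then have "card (stabiliser2 G a y) = card ?H"
      using quasi_transitive_card_stabiliser2[OF qt \<open>a \<in> \<Omega>\<close>] card_H by simp
    moreover have "stabiliser2 G a y \<subseteq> ?H" by (auto simp: stabiliser_def stabiliser2_def)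
    ultimately have "stabiliser2 G a y = ?H" using \<open>finite ?H\<close> by (metis card_subset_eq)
    then show ?thesis using h by (auto simp: stabiliser2_def)
  next
    case False
    then show ?thesis
      using h perm_group_fixes_outside[OF pg] by (auto simp: stabiliser_def)
  qed
  then have "?H \<subseteq> {id}" by auto
  then have "card ?H \<le> card {id :: 'a \<Rightarrow> 'a}" by (intro card_mono) auto
  then show False using card_H quasi_transitive_gt_one[OF qt] by simp
qed

theorem quasi_transitive_orbit_cards_distinct:
  assumes pg: "perm_group G \<Omega>" and qt: "quasi_transitive_with G \<Omega> t"
    and a: "a \<in> \<Omega>" and b: "b \<in> \<Omega>" and ne: "orbit_of G a \<noteq> orbit_of G b"
  shows "card (orbit_of G a) \<noteq> card (orbit_of G b)"
proof
  assume eq: "card (orbit_of G a) = card (orbit_of G b)"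
  let ?H = "stabiliser G a"
  define d where "d = card (orbit_of ?H b)"
  have "b \<noteq> a" using ne by auto
  have pH: "perm_group ?H \<Omega>" using perm_group_stabiliser[OF pg] .
  have suborbit: "card (orbit_of ?H y) = d" if "y \<in> \<Omega>" "y \<noteq> a" for y
  proof -
    have "t * card (orbit_of ?H y) = t * d"
      using card_stabiliser_eq_mult_suborbit[OF pg qt a that]
        card_stabiliser_eq_mult_suborbit[OF pg qt a b \<open>b \<noteq> a\<close>] d_def by auto
    then show ?thesis using quasi_transitive_gt_one[OF qt] by simp
  qed
  have H_closed: "h y \<in> orbit_of G x" if "y \<in> orbit_of G x" "h \<in> ?H" for h x y
    using orbit_of_closed[OF pg that(1)] that(2) by (simp add: stabiliser_def)
  have "a \<notin> orbit_of G b"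
    using ne orbit_of_eq_if_mem[OF pg, of a b] by blast
  have "d dvd card (orbit_of G b)"
  proof (rule dvd_card_invariant_set[OF pH finite_orbit_of[OF pg, of b]])
    show "h y \<in> orbit_of G b" if "y \<in> orbit_of G b" "h \<in> ?H" for y h
      using H_closed that .
    show "card (orbit_of ?H y) = d" if "y \<in> orbit_of G b" for y
      using that \<open>a \<notin> orbit_of G b\<close> suborbit orbit_of_subset[OF pg b] by blast
  qed
  moreover have "d dvd card (orbit_of G a - {a})"
  proof (rule dvd_card_invariant_set[OF pH])
    show "finite (orbit_of G a - {a})" using finite_orbit_of[OF pg] by simp
    show "h y \<in> orbit_of G a - {a}" if "y \<in> orbit_of G a - {a}" "h \<in> ?H" for y h
    proof -
      have "h a = a" using that(2) by (simp add: stabiliser_def)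
      then have "h y \<noteq> a"
        using that perm_group_inv_apply[OF pH that(2), of y] perm_group_inv_apply[OF pH that(2), of a]
        by auto
      then show ?thesis using that H_closed by blast
    qed
    show "card (orbit_of ?H y) = d" if "y \<in> orbit_of G a - {a}" for y
      using that suborbit orbit_of_subset[OF pg a] by blast
  qed
  moreover have "card (orbit_of G a - {a}) = card (orbit_of G b) - 1"
    using eq orbit_of_self[OF pg, of a] finite_orbit_of[OF pg, of a] by simp
  moreover have "card (orbit_of G b) > 0"
    using orbit_of_self[OF pg, of b] finite_orbit_of[OF pg, of b] card_gt_0_iff by blast
  ultimately have "d dvd card (orbit_of G b) - (card (orbit_of G b) - 1)"
    by (metis dvd_diff_nat)
  then have "d dvd 1"
    using \<open>card (orbit_of G b) > 0\<close> by simp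
  then show False
    using quasi_transitive_suborbit_nontrivial[OF pg qt a b \<open>b \<noteq> a\<close>] d_def by simp
qed

theorem mainTheorem2:
  fixes G :: "('a \<Rightarrow> 'a) set" and \<Omega> :: "'a set" and t :: nat
  assumes "perm_group G \<Omega>"
    and "quasi_transitive_with G \<Omega> t"
    and "\<not> transitive_on G \<Omega>"
  shows "(\<forall>a\<in>\<Omega>. \<forall>b\<in>\<Omega>.
            (real (card (stabiliser G a)) / real t) * real (card (orbit_of G a))
          = (real (card (stabiliser G b)) / real t) * real (card (orbit_of G b)))
       \<and> (\<forall>a\<in>\<Omega>. \<forall>b\<in>\<Omega>. orbit_of G a \<noteq> orbit_of G b
            \<longrightarrow> card (orbit_of G a) \<noteq> card (orbit_of G b))"
proof (intro conjI ballI impI)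
  fix a b
  have "card (stabiliser G a) * card (orbit_of G a) = card (stabiliser G b) * card (orbit_of G b)"
    using orbit_stabiliser[OF assms(1)] by metis
  then have "real (card (stabiliser G a)) * real (card (orbit_of G a))
           = real (card (stabiliser G b)) * real (card (orbit_of G b))"
    by (metis of_nat_mult)
  then show "(real (card (stabiliser G a)) / real t) * real (card (orbit_of G a))
          = (real (card (stabiliser G b)) / real t) * real (card (orbit_of G b))"
    by simp
next
  fix a b assume "a \<in> \<Omega>" "b \<in> \<Omega>" "orbit_of G a \<noteq> orbit_of G b"
  then show "card (orbit_of G a) \<noteq> card (orbit_of G b)"
    using quasi_transitive_orbit_cards_distinct[OF assms(1,2)] by blast
qed

end
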